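(* Let $n\ge 1$, let $a_1<\dots<a_n$ be keys stored in a sorted array, let $p=(p_1,\dots,p_n)$ be the true probability distribution over keys, and let $\hat p=(\hat p_1,\dots,\hat p_n)$ be any predicted probability distribution over $[n]$. Let $\eta$ be the earth mover's distance between $p$ and $\hat p$. When the target key is $a=a_i$ with probability $p_i$, the algorithm $\mathcal{A}$ described in the context (given $\hat p$) finds the target, and its expected number of comparisons $\sum_{i=1}^n p_i C(a_i)$ satisfies $$\sum_{i=1}^n p_i C(a_i)\;\le\; 4H(p)+8\max(\log\eta+2,\,1)+8 \;=\; O\big(H(p)+\max(\log \eta,0)\big).$$
   Context: All logarithms are base 2. $H(p)=-\sum_{i=1}^n p_i\log p_i$ is the entropy of $p$ (with $0\log 0=0$). The earth mover's distance between distributions $P,Q$ on $[n]$ is $\inf_{\gamma\in\Pi(P,Q)}\mathbb{E}_{(x,y)\sim\gamma}|x-y|$, where $\Pi(P,Q)$ is the set of couplings of $P$ and $Q$ (joint distributions on $[n]\times[n]$ with marginals $P$ and $Q$). A comparison of the target $a$ with a key $a_j$ returns whether $a<a_j$, $a=a_j$ or $a>a_j$, and counts as one query; $C(a_i)$ denotes the number of comparisons made by the algorithm when the target is $a_i$. Algorithm $\mathcal{A}$ (input: $\hat p$ and target $a\in\{a_1,\dots,a_n\}$): maintain a search range $[\ell,r]$ of indices, initially $\ell=1,r=n$, always containing the index of $a$. Run iterations $i=0,1,2,\dots$, each with two phases: (1) Bisection: repeat the following step $2^i$ times (stopping if $a$ is found). With $S=\sum_{j=\ell}^r\hat p_j$,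 pick an index $k\in[\ell,r]$ with $\sum_{j=\ell}^{k-1}\hat p_j\le S/2$ and $\sum_{j=k+1}^{r}\hat p_j\le S/2$; compare $a$ with $a_k$; if equal, return $k$; otherwise replace the range by $[\ell,k-1]$ or $[k+1,r]$ according to the comparison. (2) Binary search at the endpoints: with the current range $[\ell,r]$, set $d=\min(2^{2^i},r-\ell)$; compare $a$ with $a_{\ell+d}$ and $a_{r-d}$ to determine whether $a$ lies in $[a_\ell,a_{\ell+d}]$ or $[a_{r-d},a_r]$. If so, run standard binary search (always querying the middle of the current range) on that index range until $a$ is found. Otherwise start iteration $i+1$ with range $[\ell+d+1,r-d-1]$. *)

theory Defs
  imports Complex_Main
begin

text \<open>Indices are 1-based: keys a 1 < ... < a n, distributions p, ph on {1..n}.\<close>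

definition prob_dist :: "nat \<Rightarrow> (nat \<Rightarrow> real) \<Rightarrow> bool" where
  "prob_dist n p \<longleftrightarrow> (\<forall>i\<in>{1..n}. 0 \<le> p i) \<and> (\<Sum>i=1..n. p i) = 1"

definition entropy :: "nat \<Rightarrow> (nat \<Rightarrow> real) \<Rightarrow> real" where
  "entropy n p = - (\<Sum>i=1..n. (if p i = 0 then 0 else p i * log 2 (p i)))"

definition coupling :: "nat \<Rightarrow> (nat \<Rightarrow> real) \<Rightarrow> (nat \<Rightarrow> real) \<Rightarrow> (nat \<Rightarrow> nat \<Rightarrow> real) \<Rightarrow> bool" where
  "coupling n P Q g \<longleftrightarrow> (\<forall>x\<in>{1..n}. \<forall>y\<in>{1..n}. 0 \<le> g x y)
     \<and> (\<forall>x\<in>{1..n}. (\<Sum>y=1..n. g x y) = P x)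
     \<and> (\<forall>y\<in>{1..n}. (\<Sum>x=1..n. g x y) = Q y)"

definition emd :: "nat \<Rightarrow> (nat \<Rightarrow> real) \<Rightarrow> (nat \<Rightarrow> real) \<Rightarrow> real" where
  "emd n P Q = Inf {c. \<exists>g. coupling n P Q g \<and>
       c = (\<Sum>x=1..n. \<Sum>y=1..n. g x y * \<bar>real x - real y\<bar>)}"

text \<open>max(log eta + 2, 1), reading log 0 = -infinity (so the value is 1 when eta = 0).\<close>
definition eta_term :: "real \<Rightarrow> real" where
  "eta_term eta = (if eta = 0 then 1 else max (log 2 eta + 2) 1)"

text \<open>Valid bisection choice rule: for every range [l,r] inside [n], pick l r is a
  weighted median of ph restricted to [l,r].\<close>
definition valid_pick :: "nat \<Rightarrow> (nat \<Rightarrow> real) \<Rightarrow> (nat \<Rightarrow> nat \<Rightarrow> nat) \<Rightarrow> bool" where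
  "valid_pick n ph pick \<longleftrightarrow> (\<forall>l r. 1 \<le> l \<and> l \<le> r \<and> r \<le> n \<longrightarrow>
     (let k = pick l r; S = (\<Sum>j=l..r. ph j) in
        l \<le> k \<and> k \<le> r \<and> (\<Sum>j=l..k-1. ph j) \<le> S / 2 \<and> (\<Sum>j=k+1..r. ph j) \<le> S / 2))"

text \<open>Each transition out of a non-Done state performs exactly
  one comparison of the target x with a key.
  Bis i j l r: iteration i, bisection phase, j bisection steps left, range [l,r].
  Ends1 i l r / Ends2 i l r: endpoint phase, first / second comparison.
  BS l r: standard binary search on [l,r].\<close>
datatype st = Bis nat nat nat nat | Ends1 nat nat nat | Ends2 nat nat nat | BS nat nat | Done nat

definition dd :: "nat \<Rightarrow> nat \<Rightarrow> nat \<Rightarrow> nat" where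
  "dd i l r = min (2 ^ (2 ^ i)) (r - l)"

fun step :: "(nat \<Rightarrow> 'a::linorder) \<Rightarrow> (nat \<Rightarrow> nat \<Rightarrow> nat) \<Rightarrow> 'a \<Rightarrow> st \<Rightarrow> st" where
  "step a pick x (Bis i j l r) =
     (let k = pick l r in
      if x = a k then Done k
      else let l' = (if x < a k then l else k + 1);
               r' = (if x < a k then k - 1 else r)
           in if j \<le> 1 then Ends1 i l' r' else Bis i (j - 1) l' r')"
| "step a pick x (Ends1 i l r) =
     (let d = dd i l r in if x = a (l + d) then Done (l + d) else Ends2 i l r)"
| "step a pick x (Ends2 i l r) =
     (let d = dd i l r in
      if x = a (r - d) then Done (r - d)
      else if x < a (l + d) then BS l (l + d - 1)
      else if a (r - d) < x then BS (r - d + 1) r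
      else Bis (Suc i) (2 ^ Suc i) (l + d + 1) (r - d - 1))"
| "step a pick x (BS l r) =
     (let k = (l + r) div 2 in
      if x = a k then Done k else if x < a k then BS l (k - 1) else BS (k + 1) r)"
| "step a pick x (Done k) = Done k"

definition init_state :: "nat \<Rightarrow> st" where
  "init_state n = Bis 0 1 1 n"

definition comparisons :: "(nat \<Rightarrow> 'a::linorder) \<Rightarrow> (nat \<Rightarrow> nat \<Rightarrow> nat) \<Rightarrow> nat \<Rightarrow> 'a \<Rightarrow> nat" where
  "comparisons a pick n x = (LEAST k. \<exists>j. (step a pick x ^^ k) (init_state n) = Done j)"

end

theory Submission
  imports Defs "HOL-Analysis.Harmonic_Numbers"
begin

text \<open>
  Let \<open>I t\<close> be the first iteration whose window of radius \<open>2 ^ 2 ^ I t\<close> around the target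
  \<open>t\<close> carries predicted mass above \<open>2 / 2 ^ 2 ^ (I t + 1)\<close>. The \<open>2 ^ i\<close> bisection steps of
  iteration \<open>i\<close> shrink the predicted mass of the search range from \<open>2 / 2 ^ 2 ^ i\<close> to
  \<open>2 / 2 ^ 2 ^ (i + 1)\<close>, and a range that survives the endpoint tests contains the window; so
  the search ends within iteration \<open>I t\<close>, after \<open>O(2 ^ I t)\<close> comparisons.

  If \<open>p t \<le> 4 / 2 ^ 2 ^ I t\<close>, then \<open>2 ^ I t \<le> 2 - log p t\<close>, an entropy term. Otherwise the
  window of radius \<open>D t = 2 ^ 2 ^ (I t - 1)\<close> has predicted mass below \<open>p t / 2\<close>, so every
  coupling moves mass \<open>p t / 2\<close> farther than \<open>D t\<close>; hence \<open>\<Sum> p t D t \<le> 2 \<eta>\<close>, and by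
  concavity of \<open>log\<close> the \<open>p\<close>-average of \<open>2 ^ I t = 2 log D t\<close> over these targets is
  \<open>O(log \<eta>)\<close>.
\<close>

lemma double_le_two_power: "2 * k \<le> (2::nat) ^ k"
proof (induction k)
  case (Suc k)
  then show ?case by (cases k) auto
qed simp

lemma funpow_Suc_apply: "(f ^^ Suc k) s = (f ^^ k) (f s)"
  by (simp only: funpow_Suc_right o_apply)

lemma funpow_add_apply: "(f ^^ (m + k)) s = (f ^^ k) ((f ^^ m) s)"
  by (simp only: add.commute[of m k] funpow_add o_apply)

lemma neg_mult_log2_le:
  assumes "0 < x" "x \<le> (1::real)"
  shows "- (x * log 2 x) \<le> 3 / 4"
proof -
  have ln_le_half: "ln y \<le> y / 2" if "0 < y" for y :: real
  proof -
    have "ln (y / 2) \<le> y / 2 - 1" using that by (intro ln_le_minus_one) auto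
    then show ?thesis using that ln_2_less_1 by (simp add: ln_div)
  qed
  have "x * ln (1 / x) \<le> x * ((1 / x) / 2)"
    using ln_le_half[of "1 / x"] assms by (intro mult_left_mono) auto
  then have "- (x * ln x) \<le> 1 / 2" using assms by (simp add: ln_div)
  then have "- (x * ln x) / ln 2 \<le> (1 / 2) / (2 / 3)"
    using ln2_ge_two_thirds by (intro frac_le) auto
  then show ?thesis by (simp add: log_def)
qed

lemma power_le_two_minus_log2:
  assumes "0 < x" "x \<le> 4 / 2 ^ 2 ^ k"
  shows "(2::real) ^ k \<le> 2 - log 2 x"
proof -
  have "log 2 x \<le> log 2 (4 / 2 ^ 2 ^ k)" using assms by (intro log_mono) auto
  also have "\<dots> = 2 - 2 ^ k"
    using log_pow_cancel[of "2::real" 2] by (simp add: log_divide_pos)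
  finally show ?thesis by simp
qed

text \<open>Concavity of the logarithm, via its tangent at the point \<open>c / \<Sum>w\<close>.\<close>
lemma weighted_log_sum_le:
  fixes w D :: "'a \<Rightarrow> real"
  assumes "finite B" "B \<noteq> {}" and w: "\<And>t. t \<in> B \<Longrightarrow> 0 < w t" and D: "\<And>t. t \<in> B \<Longrightarrow> 0 < D t"
    and bound: "(\<Sum>t\<in>B. w t * D t) \<le> c"
  shows "(\<Sum>t\<in>B. w t * log 2 (D t)) \<le> (\<Sum>t\<in>B. w t) * log 2 (c / (\<Sum>t\<in>B. w t))"
proof -
  define W where "W = (\<Sum>t\<in>B. w t)"
  have W: "0 < W" unfolding W_def using assms by (intro sum_pos) auto
  have "0 < (\<Sum>t\<in>B. w t * D t)" using assms by (intro sum_pos) auto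
  then have c: "0 < c" using bound by linarith
  define Y where "Y = c / W"
  have Y: "0 < Y" unfolding Y_def using W c by simp
  have tangent: "w t * log 2 (D t) \<le> w t * log 2 Y + (w t * D t / Y - w t) / ln 2" if t: "t \<in> B" for t
  proof -
    have "ln (D t / Y) \<le> D t / Y - 1" using D[OF t] Y by (intro ln_le_minus_one) auto
    then have "ln (D t) \<le> ln Y + (D t / Y - 1)" using D[OF t] Y by (simp add: ln_div)
    then have "ln (D t) / ln 2 \<le> (ln Y + (D t / Y - 1)) / ln 2" by (rule divide_right_mono) simp
    then have "log 2 (D t) \<le> log 2 Y + (D t / Y - 1) / ln 2" by (simp add: log_def add_divide_distrib)
    then have "w t * log 2 (D t) \<le> w t * (log 2 Y + (D t / Y - 1) / ln 2)"
      using w[OF t] by (intro mult_left_mono) auto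
    then show ?thesis by (simp add: algebra_simps diff_divide_distrib)
  qed
  have "(\<Sum>t\<in>B. w t * log 2 (D t)) \<le> (\<Sum>t\<in>B. w t * log 2 Y + (w t * D t / Y - w t) / ln 2)"
    by (rule sum_mono) (rule tangent)
  also have "\<dots> = W * log 2 Y + ((\<Sum>t\<in>B. w t * D t) / Y - W) / ln 2"
    unfolding W_def
    by (simp only: sum.distrib sum_distrib_right sum_divide_distrib[symmetric] sum_subtractf)
  also have "\<dots> \<le> W * log 2 Y"
  proof -
    have "(\<Sum>t\<in>B. w t * D t) / Y \<le> c / Y" using bound Y by (intro divide_right_mono) auto
    also have "\<dots> = W" unfolding Y_def using W c by simp
    finally show ?thesis by (simp add: divide_nonpos_pos)
  qed
  finally show ?thesis unfolding W_def Y_def .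
qed

lemma prob_dist_nonneg: "prob_dist n p \<Longrightarrow> t \<in> {1..n} \<Longrightarrow> 0 \<le> p t"
  unfolding prob_dist_def by blast

lemma prob_dist_le_one:
  assumes "prob_dist n p" "t \<in> {1..n}"
  shows "p t \<le> 1"
proof -
  have "p t \<le> (\<Sum>i=1..n. p i)" using assms by (intro member_le_sum) (auto intro: prob_dist_nonneg)
  then show ?thesis using assms(1) unfolding prob_dist_def by simp
qed

section \<open>Predicted mass near the target and the earth mover's distance\<close>

definition window_mass :: "nat \<Rightarrow> (nat \<Rightarrow> real) \<Rightarrow> nat \<Rightarrow> nat \<Rightarrow> real" where
  "window_mass n q t D = (\<Sum>j\<in>{j\<in>{1..n}. t \<le> j + D \<and> j \<le> t + D}. q j)"

lemma window_mass_le_interval_mass: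
  assumes "prob_dist n q" "1 \<le> l" "r \<le> n" "l + D < t" "t + D < r"
  shows "window_mass n q t D \<le> (\<Sum>j=l..r. q j)"
  unfolding window_mass_def using assms by (intro sum_mono2) (auto intro: prob_dist_nonneg)

lemma window_mass_eq_one:
  assumes "prob_dist n q" "t \<in> {1..n}" "n \<le> D"
  shows "window_mass n q t D = 1"
proof -
  have "{j\<in>{1..n}. t \<le> j + D \<and> j \<le> t + D} = {1..n}" using assms by auto
  then show ?thesis using assms(1) unfolding window_mass_def prob_dist_def by simp
qed

lemma coupling_row_cost_ge:
  assumes g: "coupling n p q g" and t: "t \<in> {1..n}"
  shows "(p t - window_mass n q t D) * real D \<le> (\<Sum>y=1..n. g t y * \<bar>real t - real y\<bar>)"
proof -
  define W where "W = {j\<in>{1..n}. t \<le> j + D \<and> j \<le> t + D}"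
  have W: "W \<subseteq> {1..n}" unfolding W_def by auto
  have g_nonneg: "\<And>x y. x \<in> {1..n} \<Longrightarrow> y \<in> {1..n} \<Longrightarrow> 0 \<le> g x y"
    and row: "(\<Sum>y=1..n. g t y) = p t"
    and col: "\<And>y. y \<in> {1..n} \<Longrightarrow> (\<Sum>x=1..n. g x y) = q y"
    using g t unfolding coupling_def by blast+
  have near: "(\<Sum>y\<in>W. g t y) \<le> window_mass n q t D"
    unfolding window_mass_def W_def[symmetric]
  proof (rule sum_mono)
    fix y assume "y \<in> W"
    then have y: "y \<in> {1..n}" using W by auto
    have "g t y \<le> (\<Sum>x=1..n. g x y)" using t y g_nonneg by (intro member_le_sum) auto
    then show "g t y \<le> q y" using col[OF y] by simp
  qed
  have "(p t - window_mass n q t D) * real D \<le> (p t - (\<Sum>y\<in>W. g t y)) * real D"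
    using near by (intro mult_right_mono) auto
  also have "\<dots> = (\<Sum>y\<in>{1..n} - W. g t y * real D)"
  proof -
    have "p t - (\<Sum>y\<in>W. g t y) = (\<Sum>y\<in>{1..n} - W. g t y)"
      using sum.subset_diff[OF W, of "g t"] row by simp
    then show ?thesis by (simp add: sum_distrib_right)
  qed
  also have "\<dots> \<le> (\<Sum>y\<in>{1..n} - W. g t y * \<bar>real t - real y\<bar>)"
    using t g_nonneg by (intro sum_mono mult_left_mono) (auto simp: W_def)
  also have "\<dots> \<le> (\<Sum>y=1..n. g t y * \<bar>real t - real y\<bar>)"
    using t g_nonneg by (intro sum_mono2) auto
  finally show ?thesis .
qed

lemma coupling_product:
  assumes "prob_dist n p" "prob_dist n q"
  shows "coupling n p q (\<lambda>x y. p x * q y)"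
  using assms unfolding coupling_def prob_dist_def
  by (simp add: sum_distrib_left[symmetric] sum_distrib_right[symmetric])

lemma emd_ge_far_mass:
  assumes p: "prob_dist n p" and q: "prob_dist n q" and B: "B \<subseteq> {1..n}"
    and far: "\<And>t. t \<in> B \<Longrightarrow> window_mass n q t (D t) \<le> p t / 2"
  shows "(\<Sum>t\<in>B. p t * real (D t) / 2) \<le> emd n p q"
  unfolding emd_def
proof (rule cInf_greatest)
  show "{c. \<exists>g. coupling n p q g \<and> c = (\<Sum>x=1..n. \<Sum>y=1..n. g x y * \<bar>real x - real y\<bar>)} \<noteq> {}"
    using coupling_product[OF p q] by blast
next
  fix c assume "c \<in> {c. \<exists>g. coupling n p q g \<and> c = (\<Sum>x=1..n. \<Sum>y=1..n. g x y * \<bar>real x - real y\<bar>)}"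
  then obtain g where g: "coupling n p q g"
    and c: "c = (\<Sum>x=1..n. \<Sum>y=1..n. g x y * \<bar>real x - real y\<bar>)" by blast
  have "(\<Sum>t\<in>B. p t * real (D t) / 2) \<le> (\<Sum>t\<in>B. (p t - window_mass n q t (D t)) * real (D t))"
  proof (rule sum_mono)
    fix t assume "t \<in> B"
    then have "p t / 2 \<le> p t - window_mass n q t (D t)" using far by simp
    from mult_right_mono[OF this, of "real (D t)"]
    show "p t * real (D t) / 2 \<le> (p t - window_mass n q t (D t)) * real (D t)" by simp
  qed
  also have "\<dots> \<le> (\<Sum>t\<in>B. \<Sum>y=1..n. g t y * \<bar>real t - real y\<bar>)"
    using coupling_row_cost_ge[OF g] B by (intro sum_mono) auto
  also have "\<dots> \<le> c" unfolding c
    using B g by (intro sum_mono2) (auto simp: coupling_def intro!: sum_nonneg)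
  finally show "(\<Sum>t\<in>B. p t * real (D t) / 2) \<le> c" .
qed

section \<open>Number of comparisons for a single target\<close>

definition stop_iter :: "nat \<Rightarrow> (nat \<Rightarrow> real) \<Rightarrow> nat \<Rightarrow> nat" where
  "stop_iter n q t = (LEAST I. 2 / 2 ^ 2 ^ Suc I < window_mass n q t (2 ^ 2 ^ I))"

lemma stop_iter_stops:
  assumes q: "prob_dist n q" and t: "t \<in> {1..n}"
  shows "2 / 2 ^ 2 ^ Suc (stop_iter n q t) < window_mass n q t (2 ^ 2 ^ stop_iter n q t)"
  unfolding stop_iter_def
proof (rule LeastI_ex)
  have "n < 2 ^ 2 ^ n" using less_exp[of n] less_exp[of "2 ^ n"] by linarith
  then have "window_mass n q t (2 ^ 2 ^ n) = 1" by (intro window_mass_eq_one[OF q t]) simp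
  moreover have "(2::real) ^ 2 \<le> 2 ^ 2 ^ Suc n" by (intro power_increasing) auto
  ultimately show "\<exists>I. 2 / 2 ^ 2 ^ Suc I < window_mass n q t (2 ^ 2 ^ I)"
    by (intro exI[of _ n]) (simp add: field_simps)
qed

lemma window_mass_before_stop_iter:
  assumes "0 < stop_iter n q t"
  shows "window_mass n q t (2 ^ 2 ^ (stop_iter n q t - 1)) \<le> 2 / 2 ^ 2 ^ stop_iter n q t"
proof -
  have "\<not> 2 / 2 ^ 2 ^ Suc (stop_iter n q t - 1) < window_mass n q t (2 ^ 2 ^ (stop_iter n q t - 1))"
    using assms unfolding stop_iter_def by (intro not_less_Least) simp
  then show ?thesis using assms by simp
qed

lemma funpow_step_Done: "(step a pick x ^^ m) (Done j) = Done j"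
  by (induction m) auto

lemma comparisons_le:
  assumes k: "(step a pick x ^^ k) (init_state n) = Done t"
  shows "(step a pick x ^^ comparisons a pick n x) (init_state n) = Done t \<and> comparisons a pick n x \<le> k"
proof -
  let ?C = "comparisons a pick n x"
  have le: "?C \<le> k" unfolding comparisons_def using k by (intro Least_le) blast
  have "\<exists>j. (step a pick x ^^ ?C) (init_state n) = Done j"
    unfolding comparisons_def by (rule LeastI_ex) (use k in blast)
  then obtain j where j: "(step a pick x ^^ ?C) (init_state n) = Done j" by blast
  have "(step a pick x ^^ k) (init_state n) = (step a pick x ^^ (k - ?C)) (Done j)"
    using le j funpow_add_apply[where f = "step a pick x" and m = ?C and k = "k - ?C"] by simp
  then have "j = t" using k by (simp add: funpow_step_Done)
  then show ?thesis using j le by simp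
qed

context
  fixes n :: nat and a :: "nat \<Rightarrow> 'a::linorder" and t :: nat
  assumes mono: "strict_mono_on {1..n} a" and t: "t \<in> {1..n}"
begin

lemma key_eq_iff: "k \<in> {1..n} \<Longrightarrow> a t = a k \<longleftrightarrow> t = k"
  using strict_mono_on_eq[OF mono] t by blast

lemma key_less_iff: "k \<in> {1..n} \<Longrightarrow> a t < a k \<longleftrightarrow> t < k"
  using strict_mono_on_less[OF mono] t by blast

lemma binary_search_finds:
  assumes "1 \<le> l" "l \<le> t" "t \<le> r" "r \<le> n" "r + 1 - l \<le> 2 ^ m"
  shows "\<exists>k\<le>m + 1. (step a pick (a t) ^^ k) (BS l r) = Done t"
  using assms
proof (induction m arbitrary: l r)
  case 0
  then have "l = t" "r = t" by auto
  then have "step a pick (a t) (BS l r) = Done t" by (simp add: Let_def)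
  then show ?case by (intro exI[of _ 1]) simp
next
  case (Suc m)
  define k where "k = (l + r) div 2"
  have k: "k \<in> {1..n}" "l \<le> k" "k \<le> r" using Suc.prems unfolding k_def by auto
  have step_eq: "step a pick (a t) (BS l r) =
      (if t = k then Done k else if t < k then BS l (k - 1) else BS (k + 1) r)"
    using key_eq_iff[OF k(1)] key_less_iff[OF k(1)] by (simp add: Let_def k_def)
  consider "t = k" | "t < k" | "k < t" by linarith
  then show ?case
  proof cases
    case 1
    then show ?thesis using step_eq by (intro exI[of _ 1]) simp
  next
    case 2
    have "k - 1 + 1 - l \<le> 2 ^ m" using Suc.prems(5) unfolding k_def power_Suc by presburger
    moreover have "t \<le> k - 1" "k - 1 \<le> n" using 2 k by auto
    ultimately obtain k' where "k' \<le> m + 1" "(step a pick (a t) ^^ k') (BS l (k - 1)) = Done t"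
      using Suc.IH[of l "k - 1"] Suc.prems by blast
    then show ?thesis using step_eq 2 by (intro exI[of _ "Suc k'"]) (simp del: funpow.simps(2) add: funpow_Suc_apply)
  next
    case 3
    have "r + 1 - (k + 1) \<le> 2 ^ m" using Suc.prems(5) unfolding k_def power_Suc by presburger
    moreover have "1 \<le> k + 1" "k + 1 \<le> t" using 3 by auto
    ultimately obtain k' where "k' \<le> m + 1" "(step a pick (a t) ^^ k') (BS (k + 1) r) = Done t"
      using Suc.IH[of "k + 1" r] Suc.prems by blast
    then show ?thesis using step_eq 3 by (intro exI[of _ "Suc k'"]) (simp del: funpow.simps(2) add: funpow_Suc_apply)
  qed
qed

lemma endpoint_phase:
  assumes "1 \<le> l" "l \<le> t" "t \<le> r" "r \<le> n"
  shows "(\<exists>k\<le>2 ^ i + 3. (step a pick (a t) ^^ k) (Ends1 i l r) = Done t) \<or>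
    ((step a pick (a t) ^^ 2) (Ends1 i l r) = Bis (Suc i) (2 ^ Suc i) (l + 2 ^ 2 ^ i + 1) (r - 2 ^ 2 ^ i - 1)
      \<and> l + 2 ^ 2 ^ i < t \<and> t + 2 ^ 2 ^ i < r)"
proof -
  define d where "d = dd i l r"
  have d: "d \<le> 2 ^ 2 ^ i" "d \<le> r - l" unfolding d_def dd_def by auto
  have ends: "l + d \<in> {1..n}" "r - d \<in> {1..n}" using d assms by auto
  have step1: "step a pick (a t) (Ends1 i l r) = (if t = l + d then Done t else Ends2 i l r)"
    using key_eq_iff[OF ends(1)] by (auto simp: Let_def d_def)
  have step2: "step a pick (a t) (Ends2 i l r) =
      (if t = r - d then Done t else if t < l + d then BS l (l + d - 1)
       else if r - d < t then BS (r - d + 1) r else Bis (Suc i) (2 ^ Suc i) (l + d + 1) (r - d - 1))"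
    using key_eq_iff[OF ends(2)] key_less_iff[OF ends(1)] key_less_iff[OF ends(2)]
    by (auto simp: Let_def d_def)
  have two_steps: "(step a pick (a t) ^^ Suc (Suc k)) (Ends1 i l r) = (step a pick (a t) ^^ k) (step a pick (a t) (Ends2 i l r))"
    if "t \<noteq> l + d" for k
    using step1 that by (simp del: funpow.simps(2) add: funpow_Suc_apply)
  consider "t = l + d" | "t \<noteq> l + d" "t = r - d" | "t \<noteq> r - d" "t < l + d"
    | "l + d < t" "r - d < t" | "l + d < t" "t < r - d"
    by linarith
  then show ?thesis
  proof cases
    case 1
    then show ?thesis using step1 by (intro disjI1 exI[of _ 1]) simp
  next
    case 2
    then show ?thesis using two_steps[of 0] step2 ends by (intro disjI1 exI[of _ 2]) (auto simp: numeral_2_eq_2)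
  next
    case 3
    have "t \<le> l + d - 1" "l + d - 1 \<le> n" "l + d - 1 + 1 - l \<le> 2 ^ 2 ^ i"
      using d 3 ends by auto
    then obtain k where "k \<le> 2 ^ i + 1" "(step a pick (a t) ^^ k) (BS l (l + d - 1)) = Done t"
      using binary_search_finds[of l "l + d - 1" "2 ^ i" pick] assms by blast
    then show ?thesis using two_steps[of k] step2 3 by (intro disjI1 exI[of _ "Suc (Suc k)"]) auto
  next
    case 4
    have "1 \<le> r - d + 1" "r - d + 1 \<le> t" "r + 1 - (r - d + 1) \<le> 2 ^ 2 ^ i" using d 4 by auto
    then obtain k where "k \<le> 2 ^ i + 1" "(step a pick (a t) ^^ k) (BS (r - d + 1) r) = Done t"
      using binary_search_finds[of "r - d + 1" r "2 ^ i" pick] assms by blast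
    then show ?thesis using two_steps[of k] step2 4 by (intro disjI1 exI[of _ "Suc (Suc k)"]) auto
  next
    case 5
    then have "d = 2 ^ 2 ^ i" unfolding d_def dd_def by auto
    then show ?thesis using two_steps[of 0] step2 5 by (intro disjI2) (auto simp: numeral_2_eq_2)
  qed
qed

context
  fixes ph :: "nat \<Rightarrow> real" and pick :: "nat \<Rightarrow> nat \<Rightarrow> nat"
  assumes ph_dist: "prob_dist n ph" and vp: "valid_pick n ph pick"
begin

lemma bisection_step:
  assumes "1 \<le> l" "l \<le> t" "t \<le> r" "r \<le> n"
  shows "step a pick (a t) (Bis i (Suc j) l r) = Done t \<or>
    (\<exists>l' r'. 1 \<le> l' \<and> l' \<le> t \<and> t \<le> r' \<and> r' \<le> n
      \<and> (\<Sum>x=l'..r'. ph x) \<le> (\<Sum>x=l..r. ph x) / 2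
      \<and> step a pick (a t) (Bis i (Suc j) l r) = (if j = 0 then Ends1 i l' r' else Bis i j l' r'))"
proof -
  define k where "k = pick l r"
  have k: "l \<le> k" "k \<le> r" "(\<Sum>x=l..k - 1. ph x) \<le> (\<Sum>x=l..r. ph x) / 2"
      "(\<Sum>x=k + 1..r. ph x) \<le> (\<Sum>x=l..r. ph x) / 2"
    using vp assms unfolding valid_pick_def Let_def k_def by auto
  then have "k \<in> {1..n}" using assms by auto
  then have step_eq: "step a pick (a t) (Bis i (Suc j) l r) =
      (if t = k then Done k
       else if t < k then (if j = 0 then Ends1 i l (k - 1) else Bis i j l (k - 1))
       else (if j = 0 then Ends1 i (k + 1) r else Bis i j (k + 1) r))"
    using key_eq_iff key_less_iff by (simp add: Let_def k_def)
  consider "t = k" | "t < k" | "k < t" by linarith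
  then show ?thesis
  proof cases
    case 1
    then show ?thesis using step_eq by simp
  next
    case 2
    then show ?thesis using step_eq k assms by (intro disjI2 exI[of _ l] exI[of _ "k - 1"]) auto
  next
    case 3
    then show ?thesis using step_eq k assms by (intro disjI2 exI[of _ "k + 1"] exI[of _ r]) auto
  qed
qed

lemma bisection_phase:
  assumes "1 \<le> l" "l \<le> t" "t \<le> r" "r \<le> n" "0 < j"
  shows "(\<exists>k\<le>j. (step a pick (a t) ^^ k) (Bis i j l r) = Done t) \<or>
    (\<exists>l' r'. (step a pick (a t) ^^ j) (Bis i j l r) = Ends1 i l' r'
      \<and> 1 \<le> l' \<and> l' \<le> t \<and> t \<le> r' \<and> r' \<le> n \<and> (\<Sum>x=l'..r'. ph x) \<le> (\<Sum>x=l..r. ph x) / 2 ^ j)"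
  using assms
proof (induction j arbitrary: l r)
  case 0
  then show ?case by simp
next
  case (Suc j)
  from bisection_step[OF Suc.prems(1-4), of i j] show ?case
  proof (elim disjE exE conjE)
    assume "step a pick (a t) (Bis i (Suc j) l r) = Done t"
    then show ?thesis by (intro disjI1 exI[of _ 1]) simp
  next
    fix l' r'
    assume range': "1 \<le> l'" "l' \<le> t" "t \<le> r'" "r' \<le> n"
      and halved: "(\<Sum>x=l'..r'. ph x) \<le> (\<Sum>x=l..r. ph x) / 2"
      and step_eq: "step a pick (a t) (Bis i (Suc j) l r) = (if j = 0 then Ends1 i l' r' else Bis i j l' r')"
    show ?thesis
    proof (cases "j = 0")
      case True
      then show ?thesis using range' halved step_eq by (intro disjI2 exI[of _ l'] exI[of _ r']) simp
    next
      case False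
      then have step_eq: "step a pick (a t) (Bis i (Suc j) l r) = Bis i j l' r'" using step_eq by simp
      have "0 < j" using False by simp
      from Suc.IH[OF range' this] show ?thesis
      proof (elim disjE exE conjE)
        fix k assume "k \<le> j" "(step a pick (a t) ^^ k) (Bis i j l' r') = Done t"
        then show ?thesis using step_eq
          by (intro disjI1 exI[of _ "Suc k"]) (simp del: funpow.simps(2) add: funpow_Suc_apply)
      next
        fix l'' r''
        assume "(step a pick (a t) ^^ j) (Bis i j l' r') = Ends1 i l'' r''"
          "1 \<le> l''" "l'' \<le> t" "t \<le> r''" "r'' \<le> n"
          "(\<Sum>x=l''..r''. ph x) \<le> (\<Sum>x=l'..r'. ph x) / 2 ^ j"
        moreover have "(\<Sum>x=l'..r'. ph x) / 2 ^ j \<le> (\<Sum>x=l..r. ph x) / 2 ^ Suc j"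
          using halved by (simp add: field_simps)
        ultimately show ?thesis using step_eq
          by (intro disjI2 exI[of _ l''] exI[of _ r'']) (simp del: funpow.simps(2) add: funpow_Suc_apply)
      qed
    qed
  qed
qed

lemma iteration_outcome:
  assumes "1 \<le> l" "l \<le> t" "t \<le> r" "r \<le> n" "(\<Sum>x=l..r. ph x) \<le> 2 / 2 ^ 2 ^ i"
  shows "(\<exists>k\<le>2 * 2 ^ i + 3. (step a pick (a t) ^^ k) (Bis i (2 ^ i) l r) = Done t) \<or>
    (window_mass n ph t (2 ^ 2 ^ i) \<le> 2 / 2 ^ 2 ^ Suc i \<and>
     (\<exists>l' r'. (step a pick (a t) ^^ (2 ^ i + 2)) (Bis i (2 ^ i) l r) = Bis (Suc i) (2 ^ Suc i) l' r'
        \<and> 1 \<le> l' \<and> l' \<le> t \<and> t \<le> r' \<and> r' \<le> n \<and> (\<Sum>x=l'..r'. ph x) \<le> 2 / 2 ^ 2 ^ Suc i))"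
proof -
  have "0 < (2::nat) ^ i" by simp
  from bisection_phase[OF assms(1-4) this, of i] show ?thesis
  proof (elim disjE exE conjE)
    fix k assume "k \<le> 2 ^ i" "(step a pick (a t) ^^ k) (Bis i (2 ^ i) l r) = Done t"
    then show ?thesis by (intro disjI1 exI[of _ k]) auto
  next
    fix l' r'
    assume bis: "(step a pick (a t) ^^ 2 ^ i) (Bis i (2 ^ i) l r) = Ends1 i l' r'"
      and range': "1 \<le> l'" "l' \<le> t" "t \<le> r'" "r' \<le> n"
      and mass': "(\<Sum>x=l'..r'. ph x) \<le> (\<Sum>x=l..r. ph x) / 2 ^ 2 ^ i"
    have "(\<Sum>x=l..r. ph x) / 2 ^ 2 ^ i \<le> (2 / 2 ^ 2 ^ i) / 2 ^ 2 ^ i"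
      using assms(5) by (rule divide_right_mono) simp
    also have "\<dots> = 2 / 2 ^ 2 ^ Suc i" by (simp add: power_add[symmetric] mult_2)
    finally have small: "(\<Sum>x=l'..r'. ph x) \<le> 2 / 2 ^ 2 ^ Suc i" using mass' by linarith
    from endpoint_phase[OF range', of i pick] show ?thesis
    proof (elim disjE exE conjE)
      fix k assume "k \<le> 2 ^ i + 3" "(step a pick (a t) ^^ k) (Ends1 i l' r') = Done t"
      then show ?thesis using bis by (intro disjI1 exI[of _ "2 ^ i + k"]) (auto simp: funpow_add_apply)
    next
      let ?l = "l' + 2 ^ 2 ^ i + 1" and ?r = "r' - 2 ^ 2 ^ i - 1"
      assume ends: "(step a pick (a t) ^^ 2) (Ends1 i l' r') = Bis (Suc i) (2 ^ Suc i) ?l ?r"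
        and window: "l' + 2 ^ 2 ^ i < t" "t + 2 ^ 2 ^ i < r'"
      have "window_mass n ph t (2 ^ 2 ^ i) \<le> 2 / 2 ^ 2 ^ Suc i"
        using window_mass_le_interval_mass[OF ph_dist range'(1,4) window] small by linarith
      moreover have "(\<Sum>x=?l..?r. ph x) \<le> (\<Sum>x=l'..r'. ph x)"
        using range' by (intro sum_mono2) (auto intro: prob_dist_nonneg[OF ph_dist])
      moreover have "(step a pick (a t) ^^ (2 ^ i + 2)) (Bis i (2 ^ i) l r) = Bis (Suc i) (2 ^ Suc i) ?l ?r"
        using bis ends by (simp only: funpow_add_apply)
      ultimately show ?thesis using small window range' by (intro disjI2 conjI exI[of _ ?l] exI[of _ ?r]) auto
    qed
  qed
qed

text \<open>Iteration \<open>i < I\<close> costs at most \<open>2 ^ i + 2\<close> comparisons and iteration \<open>I\<close> at most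
  \<open>2 * 2 ^ I + 3\<close>; the bound telescopes these.\<close>
lemma iterations_finish:
  assumes stop: "2 / 2 ^ 2 ^ Suc I < window_mass n ph t (2 ^ 2 ^ I)"
    and "i \<le> I" "1 \<le> l" "l \<le> t" "t \<le> r" "r \<le> n" "(\<Sum>x=l..r. ph x) \<le> 2 / 2 ^ 2 ^ i"
  shows "\<exists>k. k + 2 ^ i + 2 * i \<le> 3 * 2 ^ I + 2 * I + 3
    \<and> (step a pick (a t) ^^ k) (Bis i (2 ^ i) l r) = Done t"
  using assms(2-)
proof (induction i arbitrary: l r rule: inc_induct)
  case base
  from iteration_outcome[OF base] stop show ?case by auto
next
  case (step i)
  from iteration_outcome[OF step.prems] show ?case
  proof (elim disjE exE conjE)
    fix k assume "k \<le> 2 * 2 ^ i + 3" "(step a pick (a t) ^^ k) (Bis i (2 ^ i) l r) = Done t"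
    moreover have "(2::nat) ^ i \<le> 2 ^ I" using step.hyps by (simp add: power_increasing)
    ultimately show ?thesis using step.hyps by (intro exI[of _ k] conjI) linarith+
  next
    fix l' r'
    assume iter: "(step a pick (a t) ^^ (2 ^ i + 2)) (Bis i (2 ^ i) l r) = Bis (Suc i) (2 ^ Suc i) l' r'"
      and "1 \<le> l'" "l' \<le> t" "t \<le> r'" "r' \<le> n" "(\<Sum>x=l'..r'. ph x) \<le> 2 / 2 ^ 2 ^ Suc i"
    then obtain k where k: "k + 2 ^ Suc i + 2 * Suc i \<le> 3 * 2 ^ I + 2 * I + 3"
      "(step a pick (a t) ^^ k) (Bis (Suc i) (2 ^ Suc i) l' r') = Done t"
      using step.IH by blast
    then have "(step a pick (a t) ^^ (2 ^ i + 2 + k)) (Bis i (2 ^ i) l r) = Done t"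
      using iter by (simp only: funpow_add_apply)
    then show ?thesis using k(1) by (intro exI[of _ "2 ^ i + 2 + k"]) simp
  qed
qed

lemma comparisons_le_stop_iter:
  "(step a pick (a t) ^^ comparisons a pick n (a t)) (init_state n) = Done t
    \<and> comparisons a pick n (a t) \<le> 4 * 2 ^ stop_iter n ph t + 2"
proof -
  let ?I = "stop_iter n ph t"
  have "(\<Sum>x=1..n. ph x) \<le> 2 / 2 ^ 2 ^ 0" using ph_dist unfolding prob_dist_def by simp
  then obtain k where k: "k + 1 \<le> 3 * 2 ^ ?I + 2 * ?I + 3" "(step a pick (a t) ^^ k) (init_state n) = Done t"
    using iterations_finish[OF stop_iter_stops[OF ph_dist t], of 0 1 n] t unfolding init_state_def by auto
  have "k \<le> 4 * 2 ^ ?I + 2" using k(1) double_le_two_power[of ?I] by linarith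
  then show ?thesis using comparisons_le[OF k(2)] by auto
qed

end

end

section \<open>Expected number of comparisons\<close>

lemma sum_weighted_power_le_neg_log:
  assumes "\<And>t. t \<in> G \<Longrightarrow> 0 \<le> p t" "\<And>t. t \<in> G \<Longrightarrow> p t \<le> 4 / 2 ^ 2 ^ I t"
  shows "(\<Sum>t\<in>G. p t * 2 ^ I t) \<le> (\<Sum>t\<in>G. 2 * p t - (if p t = 0 then 0 else p t * log 2 (p t)))"
proof (rule sum_mono)
  fix t assume t: "t \<in> G"
  show "p t * 2 ^ I t \<le> 2 * p t - (if p t = 0 then 0 else p t * log 2 (p t))"
  proof (cases "p t = 0")
    case False
    then have "0 < p t" using assms(1)[OF t] by simp
    then have "p t * 2 ^ I t \<le> p t * (2 - log 2 (p t))"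
      using power_le_two_minus_log2 assms(2)[OF t] by (intro mult_left_mono) auto
    then show ?thesis using False by (simp add: algebra_simps)
  qed simp
qed

lemma mult_log2_le_eta_term:
  assumes "0 < \<eta>" "0 \<le> P" "P \<le> 1"
  shows "P * log 2 \<eta> \<le> eta_term \<eta> - 1"
proof (cases "0 \<le> log 2 \<eta>")
  case True
  then have "P * log 2 \<eta> \<le> log 2 \<eta>" using assms mult_right_mono[of P 1] by simp
  then show ?thesis using assms unfolding eta_term_def by simp
next
  case False
  then have "P * log 2 \<eta> \<le> 0" using assms by (simp add: mult_nonneg_nonpos)
  then show ?thesis using assms unfolding eta_term_def by simp
qed

lemma sum_power_far_targets_le:
  assumes p: "prob_dist n p" and q: "prob_dist n q" and B: "B \<subseteq> {1..n}" "B \<noteq> {}"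
    and pos: "\<And>t. t \<in> B \<Longrightarrow> 0 < p t" and I: "\<And>t. t \<in> B \<Longrightarrow> 0 < I t"
    and far: "\<And>t. t \<in> B \<Longrightarrow> window_mass n q t (2 ^ 2 ^ (I t - 1)) \<le> p t / 2"
  shows "(\<Sum>t\<in>B. p t * 2 ^ I t) \<le> 2 * (\<Sum>t\<in>B. p t) + 2 * eta_term (emd n p q) - 1 / 2"
proof -
  define P where "P = (\<Sum>t\<in>B. p t)"
  define D where "D t = (2::nat) ^ 2 ^ (I t - 1)" for t
  define \<eta> where "\<eta> = emd n p q"
  have fin: "finite B" using B(1) finite_subset by blast
  have P: "0 < P" "P \<le> 1"
  proof -
    show "0 < P" unfolding P_def using fin B(2) pos by (intro sum_pos) auto
    have "P \<le> (\<Sum>t=1..n. p t)" unfolding P_def using B(1) by (intro sum_mono2) (auto intro: prob_dist_nonneg[OF p])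
    then show "P \<le> 1" using p unfolding prob_dist_def by simp
  qed
  have "(\<Sum>t\<in>B. p t * real (D t) / 2) \<le> \<eta>"
    unfolding \<eta>_def D_def using far by (intro emd_ge_far_mass[OF p q B(1)]) auto
  then have sumD: "(\<Sum>t\<in>B. p t * real (D t)) \<le> 2 * \<eta>" by (simp add: sum_divide_distrib[symmetric])
  have "0 < (\<Sum>t\<in>B. p t * real (D t))" using fin B(2) pos by (intro sum_pos) (auto simp: D_def)
  then have \<eta>: "0 < \<eta>" using sumD by linarith
  have log_D: "p t * 2 ^ I t = 2 * (p t * log 2 (real (D t)))" if "t \<in> B" for t
  proof -
    have "(2::real) ^ I t = 2 * 2 ^ (I t - 1)" using I[OF that] by (simp flip: power_Suc)
    then show ?thesis by (simp add: D_def)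
  qed
  have "(\<Sum>t\<in>B. p t * 2 ^ I t) = (\<Sum>t\<in>B. 2 * (p t * log 2 (real (D t))))"
    using log_D by (rule sum.cong[OF refl])
  also have "\<dots> = 2 * (\<Sum>t\<in>B. p t * log 2 (real (D t)))" by (simp only: sum_distrib_left)
  also have "\<dots> \<le> 2 * (P * log 2 (2 * \<eta> / P))"
    unfolding P_def using weighted_log_sum_le[OF fin B(2) pos _ sumD] by (simp add: D_def)
  also have "\<dots> = 2 * P + 2 * (P * log 2 \<eta>) - 2 * (P * log 2 P)"
    using \<eta> P by (simp add: log_divide_pos log_mult algebra_simps)
  also have "\<dots> \<le> 2 * P + 2 * (eta_term \<eta> - 1) + 3 / 2"
    using mult_log2_le_eta_term[OF \<eta> less_imp_le[OF P(1)] P(2)] neg_mult_log2_le[OF P]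
    by (simp add: algebra_simps)
  finally show ?thesis unfolding P_def \<eta>_def by simp
qed

lemma sum_power_stop_iter_le:
  assumes p: "prob_dist n p" and q: "prob_dist n q"
  shows "(\<Sum>t=1..n. p t * 2 ^ stop_iter n q t) \<le> entropy n p + 2 * eta_term (emd n p q) + 3 / 2"
proof -
  let ?I = "stop_iter n q" and ?h = "\<lambda>t. if p t = 0 then 0 else p t * log 2 (p t)"
  define B where "B = {t\<in>{1..n}. 4 / 2 ^ 2 ^ ?I t < p t}"
  define G where "G = {1..n} - B"
  have split: "(\<Sum>t=1..n. f t) = (\<Sum>t\<in>G. f t) + (\<Sum>t\<in>B. f t)" for f :: "nat \<Rightarrow> real"
    unfolding G_def B_def by (rule sum.subset_diff) auto
  have "(\<Sum>t\<in>G. p t * 2 ^ ?I t) \<le> (\<Sum>t\<in>G. 2 * p t - ?h t)"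
    using prob_dist_nonneg[OF p] by (intro sum_weighted_power_le_neg_log) (auto simp: G_def B_def)
  moreover have "(\<Sum>t\<in>B. ?h t) \<le> 0"
  proof (rule sum_nonpos)
    fix t assume "t \<in> B"
    then have "0 \<le> p t" "p t \<le> 1" using prob_dist_nonneg[OF p] prob_dist_le_one[OF p] by (auto simp: B_def)
    then show "?h t \<le> 0" by (cases "p t = 0") (auto intro!: mult_nonneg_nonpos)
  qed
  ultimately have good: "(\<Sum>t\<in>G. p t * 2 ^ ?I t) \<le> 2 * (\<Sum>t\<in>G. p t) + entropy n p"
    using split[of ?h] by (simp add: entropy_def sum_subtractf sum_distrib_left)
  have total: "(\<Sum>t\<in>G. p t) + (\<Sum>t\<in>B. p t) = 1" using split[of p] p unfolding prob_dist_def by simp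
  have eta_term: "1 \<le> eta_term (emd n p q)" unfolding eta_term_def by simp
  show ?thesis
  proof (cases "B = {}")
    case True
    then show ?thesis using good total eta_term split[of "\<lambda>t. p t * 2 ^ ?I t"] by simp
  next
    case False
    have far: "0 < p t \<and> 0 < ?I t \<and> window_mass n q t (2 ^ 2 ^ (?I t - 1)) \<le> p t / 2" if "t \<in> B" for t
    proof -
      have t: "t \<in> {1..n}" and big: "4 / 2 ^ 2 ^ ?I t < p t" using that unfolding B_def by auto
      have "0 < ?I t" using big prob_dist_le_one[OF p t] by (cases "?I t") auto
      moreover have "window_mass n q t (2 ^ 2 ^ (?I t - 1)) \<le> (4 / 2 ^ 2 ^ ?I t) / 2"
        using window_mass_before_stop_iter[OF \<open>0 < ?I t\<close>] by simp
      moreover have "0 < p t" by (rule less_trans[OF _ big]) simp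
      ultimately show ?thesis using big by auto
    qed
    have "(\<Sum>t\<in>B. p t * 2 ^ ?I t) \<le> 2 * (\<Sum>t\<in>B. p t) + 2 * eta_term (emd n p q) - 1 / 2"
      using far by (intro sum_power_far_targets_le[OF p q _ False]) (auto simp: B_def)
    then show ?thesis using good total split[of "\<lambda>t. p t * 2 ^ ?I t"] by linarith
  qed
qed

theorem theorem3p1:
  fixes n :: nat and a :: "nat \<Rightarrow> 'a::linorder" and p ph :: "nat \<Rightarrow> real"
    and pick :: "nat \<Rightarrow> nat \<Rightarrow> nat"
  assumes "n \<ge> 1"
    and "strict_mono_on {1..n} a"
    and "prob_dist n p"
    and "prob_dist n ph"
    and "valid_pick n ph pick"
  shows "(\<forall>i\<in>{1..n}. \<exists>k. (step a pick (a i) ^^ k) (init_state n) = Done i)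
    \<and> (\<Sum>i=1..n. p i * real (comparisons a pick n (a i)))
        \<le> 4 * entropy n p + 8 * eta_term (emd n p ph) + 8"
proof -
  note search = comparisons_le_stop_iter[OF assms(2) _ assms(4,5)]
  have "(\<Sum>i=1..n. p i * real (comparisons a pick n (a i))) \<le> (\<Sum>i=1..n. p i * (4 * 2 ^ stop_iter n ph i + 2))"
  proof (rule sum_mono)
    fix i assume i: "i \<in> {1..n}"
    have "real (comparisons a pick n (a i)) \<le> real (4 * 2 ^ stop_iter n ph i + 2)"
      using search[OF i] by (intro of_nat_mono) blast
    then show "p i * real (comparisons a pick n (a i)) \<le> p i * (4 * 2 ^ stop_iter n ph i + 2)"
      using prob_dist_nonneg[OF assms(3) i] by (intro mult_left_mono) simp_all
  qed
  also have "\<dots> = 4 * (\<Sum>i=1..n. p i * 2 ^ stop_iter n ph i) + 2 * (\<Sum>i=1..n. p i)"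
    by (simp add: algebra_simps sum.distrib sum_distrib_left)
  also have "\<dots> \<le> 4 * entropy n p + 8 * eta_term (emd n p ph) + 8"
    using sum_power_stop_iter_le[OF assms(3,4)] assms(3) unfolding prob_dist_def by linarith
  finally show ?thesis using search by blast
qed

end
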